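(* Let $\langle B,\wedge,{}'\rangle$ be an algebra with $\wedge$ binary and ${}'$ unary satisfying $x\wedge(y\wedge z)\approx y\wedge(z\wedge x)$ and $x\approx (x'\wedge y)'\wedge(x'\wedge y')'$. Then $x''=x$ for all $x\in B$. *)

theory Defs
  imports Main
begin

end

theory Submission
  imports Defs
begin

text \<open>The cyclic law alone only lets a product be rotated; once every element is known to be a
  product \<open>p \<cdot> q\<close> (which the second axiom provides, with \<open>p = (x\<^sup>c \<cdot> y)\<^sup>c\<close> and
  \<open>q = (x\<^sup>c \<cdot> y\<^sup>c)\<^sup>c\<close>), rotating inside \<open>(p \<cdot> q) \<cdot> y\<close> yields commutativity and then
  associativity. In the resulting commutative semigroup the second axiom is Huntington's axiom
  in dual form, and Huntington's argument applies: it first shows \<open>x\<^sup>c \<cdot> x\<^sup>c\<^sup>c = x \<cdot> x\<^sup>c\<close>, after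
  which the axiom instantiated at \<open>x\<close> and at \<open>x\<^sup>c\<close> expresses \<open>x\<close> and \<open>x\<^sup>c\<^sup>c\<close> by the same
  term.\<close>

locale cyclic_magma =
  fixes B :: "'a set" and meet :: "'a \<Rightarrow> 'a \<Rightarrow> 'a" (infixl "\<cdot>" 70)
  assumes meet_closed: "x \<in> B \<Longrightarrow> y \<in> B \<Longrightarrow> x \<cdot> y \<in> B"
    and meet_cyclic: "x \<in> B \<Longrightarrow> y \<in> B \<Longrightarrow> z \<in> B \<Longrightarrow> x \<cdot> (y \<cdot> z) = y \<cdot> (z \<cdot> x)"
begin

lemma meet_rotate: "x \<in> B \<Longrightarrow> y \<in> B \<Longrightarrow> z \<in> B \<Longrightarrow> x \<cdot> (y \<cdot> z) = z \<cdot> (x \<cdot> y)"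
  by (metis meet_closed meet_cyclic)

lemma meet_meet_pairs:
  assumes "a \<in> B" "b \<in> B" "c \<in> B" "d \<in> B"
  shows "a \<cdot> b \<cdot> (c \<cdot> d) = a \<cdot> (b \<cdot> d \<cdot> c)"
proof -
  have "a \<cdot> b \<cdot> (c \<cdot> d) = c \<cdot> (d \<cdot> (a \<cdot> b))"
    using assms by (metis meet_closed meet_cyclic)
  also have "d \<cdot> (a \<cdot> b) = a \<cdot> (b \<cdot> d)"
    using assms by (metis meet_cyclic)
  also have "c \<cdot> (a \<cdot> (b \<cdot> d)) = a \<cdot> (b \<cdot> d \<cdot> c)"
    using assms by (metis meet_closed meet_rotate)
  finally show ?thesis .
qed

end

locale factorizable_cyclic_magma = cyclic_magma +
  assumes meet_factor: "x \<in> B \<Longrightarrow> \<exists>p\<in>B. \<exists>q\<in>B. x = p \<cdot> q"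
begin

lemma meet_meet_meet_reorder:
  assumes "a \<in> B" "b \<in> B" "c \<in> B" "d \<in> B"
  shows "a \<cdot> b \<cdot> c \<cdot> d = a \<cdot> (b \<cdot> (d \<cdot> c))"
proof -
  obtain p q where pq: "p \<in> B" "q \<in> B" "d = p \<cdot> q"
    using meet_factor \<open>d \<in> B\<close> by blast
  have "a \<cdot> b \<cdot> c \<cdot> d = a \<cdot> b \<cdot> (c \<cdot> q \<cdot> p)"
    using assms pq by (metis meet_closed meet_meet_pairs)
  also have "\<dots> = a \<cdot> (b \<cdot> p \<cdot> (c \<cdot> q))"
    using assms pq by (metis meet_closed meet_meet_pairs)
  also have "b \<cdot> p \<cdot> (c \<cdot> q) = b \<cdot> (d \<cdot> c)"
    using assms pq by (metis meet_meet_pairs)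
  finally show ?thesis .
qed

lemma meet_swap_outer:
  assumes "a \<in> B" "b \<in> B" "c \<in> B"
  shows "a \<cdot> b \<cdot> c = c \<cdot> b \<cdot> a"
proof -
  obtain p q where pq: "p \<in> B" "q \<in> B" "a = p \<cdot> q"
    using meet_factor \<open>a \<in> B\<close> by blast
  have "a \<cdot> b \<cdot> c = p \<cdot> (q \<cdot> (c \<cdot> b))"
    using assms pq by (metis meet_meet_meet_reorder)
  also have "\<dots> = c \<cdot> b \<cdot> a"
    using assms pq by (metis meet_closed meet_rotate)
  finally show ?thesis .
qed

lemma meet_commute_product:
  assumes "a \<in> B" "b \<in> B" "c \<in> B"
  shows "a \<cdot> b \<cdot> c = c \<cdot> (a \<cdot> b)"
proof -
  obtain p q where pq: "p \<in> B" "q \<in> B" "a = p \<cdot> q"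
    using meet_factor \<open>a \<in> B\<close> by blast
  have "a \<cdot> b \<cdot> c = c \<cdot> b \<cdot> (p \<cdot> q)"
    using assms pq by (metis meet_swap_outer)
  also have "\<dots> = c \<cdot> (b \<cdot> q \<cdot> p)"
    using assms pq by (metis meet_meet_pairs)
  also have "b \<cdot> q \<cdot> p = a \<cdot> b"
    using assms pq by (metis meet_swap_outer)
  finally show ?thesis .
qed

lemma meet_commute: "x \<in> B \<Longrightarrow> y \<in> B \<Longrightarrow> x \<cdot> y = y \<cdot> x"
  by (metis meet_factor meet_commute_product)

lemma meet_assoc: "x \<in> B \<Longrightarrow> y \<in> B \<Longrightarrow> z \<in> B \<Longrightarrow> x \<cdot> y \<cdot> z = x \<cdot> (y \<cdot> z)"
  by (metis meet_commute_product meet_cyclic)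

end

locale dual_huntington =
  fixes B :: "'a set" and meet :: "'a \<Rightarrow> 'a \<Rightarrow> 'a" (infixl "\<cdot>" 70)
    and cmp :: "'a \<Rightarrow> 'a" ("_\<^sup>c" [1000] 1000)
  assumes meet_closed: "x \<in> B \<Longrightarrow> y \<in> B \<Longrightarrow> x \<cdot> y \<in> B"
    and cmp_closed: "x \<in> B \<Longrightarrow> x\<^sup>c \<in> B"
    and meet_commute: "x \<in> B \<Longrightarrow> y \<in> B \<Longrightarrow> x \<cdot> y = y \<cdot> x"
    and meet_assoc: "x \<in> B \<Longrightarrow> y \<in> B \<Longrightarrow> z \<in> B \<Longrightarrow> x \<cdot> y \<cdot> z = x \<cdot> (y \<cdot> z)"
    and huntington: "x \<in> B \<Longrightarrow> y \<in> B \<Longrightarrow> x = (x\<^sup>c \<cdot> y)\<^sup>c \<cdot> (x\<^sup>c \<cdot> y\<^sup>c)\<^sup>c"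
begin

lemmas closed = meet_closed cmp_closed

lemma meet_left_commute: "x \<in> B \<Longrightarrow> y \<in> B \<Longrightarrow> z \<in> B \<Longrightarrow> x \<cdot> (y \<cdot> z) = y \<cdot> (x \<cdot> z)"
  by (metis meet_assoc meet_commute)

lemma meet_cmp_meet_cmp_cmp:
  assumes "x \<in> B" "y \<in> B"
  shows "x \<cdot> (x\<^sup>c \<cdot> y\<^sup>c\<^sup>c)\<^sup>c = x \<cdot> (x\<^sup>c \<cdot> y)\<^sup>c"
proof -
  have "x \<cdot> (x\<^sup>c \<cdot> y\<^sup>c\<^sup>c)\<^sup>c = (x\<^sup>c \<cdot> y)\<^sup>c \<cdot> (x\<^sup>c \<cdot> y\<^sup>c)\<^sup>c \<cdot> (x\<^sup>c \<cdot> y\<^sup>c\<^sup>c)\<^sup>c"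
    using huntington[OF assms] by metis
  also have "\<dots> = (x\<^sup>c \<cdot> y)\<^sup>c \<cdot> ((x\<^sup>c \<cdot> y\<^sup>c)\<^sup>c \<cdot> (x\<^sup>c \<cdot> y\<^sup>c\<^sup>c)\<^sup>c)"
    using assms by (simp add: closed meet_assoc)
  also have "\<dots> = (x\<^sup>c \<cdot> y)\<^sup>c \<cdot> x"
    using assms huntington[of x "y\<^sup>c"] by (metis closed)
  finally show ?thesis
    using assms by (simp add: closed meet_commute)
qed

lemma cmp_meet_cmp_cmp:
  assumes "x \<in> B"
  shows "x\<^sup>c \<cdot> x\<^sup>c\<^sup>c = x \<cdot> x\<^sup>c"
proof -
  have "x\<^sup>c \<cdot> x\<^sup>c\<^sup>c = x\<^sup>c \<cdot> ((x\<^sup>c\<^sup>c\<^sup>c \<cdot> x\<^sup>c)\<^sup>c \<cdot> (x\<^sup>c\<^sup>c\<^sup>c \<cdot> x\<^sup>c\<^sup>c)\<^sup>c)"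
    using assms huntington[of "x\<^sup>c\<^sup>c" "x\<^sup>c"] by (metis closed)
  also have "\<dots> = (x\<^sup>c\<^sup>c\<^sup>c \<cdot> x\<^sup>c)\<^sup>c \<cdot> (x\<^sup>c \<cdot> (x\<^sup>c\<^sup>c \<cdot> x\<^sup>c\<^sup>c\<^sup>c)\<^sup>c)"
    using assms by (metis closed meet_left_commute meet_commute)
  also have "x\<^sup>c \<cdot> (x\<^sup>c\<^sup>c \<cdot> x\<^sup>c\<^sup>c\<^sup>c)\<^sup>c = x\<^sup>c \<cdot> (x\<^sup>c\<^sup>c \<cdot> x\<^sup>c)\<^sup>c"
    using assms by (simp add: closed meet_cmp_meet_cmp_cmp)
  also have "(x\<^sup>c\<^sup>c\<^sup>c \<cdot> x\<^sup>c)\<^sup>c \<cdot> (x\<^sup>c \<cdot> (x\<^sup>c\<^sup>c \<cdot> x\<^sup>c)\<^sup>c) = x\<^sup>c \<cdot> ((x\<^sup>c \<cdot> x\<^sup>c\<^sup>c)\<^sup>c \<cdot> (x\<^sup>c \<cdot> x\<^sup>c\<^sup>c\<^sup>c)\<^sup>c)"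
    using assms by (metis closed meet_left_commute meet_commute)
  also have "\<dots> = x\<^sup>c \<cdot> x"
    using assms huntington[of x "x\<^sup>c\<^sup>c"] by (metis closed)
  finally show ?thesis
    using assms by (simp add: closed meet_commute)
qed

lemma cmp_cmp:
  assumes "x \<in> B"
  shows "x\<^sup>c\<^sup>c = x"
proof -
  have cmp_eq: "y\<^sup>c = (y \<cdot> y\<^sup>c\<^sup>c)\<^sup>c \<cdot> (y \<cdot> y\<^sup>c)\<^sup>c" if "y \<in> B" for y
  proof -
    have "y\<^sup>c = (y\<^sup>c\<^sup>c \<cdot> y)\<^sup>c \<cdot> (y\<^sup>c\<^sup>c \<cdot> y\<^sup>c)\<^sup>c"
      using that by (simp add: closed huntington[symmetric])
    also have "y\<^sup>c\<^sup>c \<cdot> y\<^sup>c = y \<cdot> y\<^sup>c"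
      using that by (metis closed meet_commute cmp_meet_cmp_cmp)
    finally show ?thesis
      using that by (simp add: closed meet_commute)
  qed
  have "x\<^sup>c\<^sup>c = (x\<^sup>c \<cdot> x\<^sup>c\<^sup>c\<^sup>c)\<^sup>c \<cdot> (x\<^sup>c \<cdot> x\<^sup>c\<^sup>c)\<^sup>c"
    using assms by (intro cmp_eq) (rule cmp_closed)
  also have "\<dots> = (x\<^sup>c \<cdot> x\<^sup>c\<^sup>c)\<^sup>c \<cdot> (x\<^sup>c \<cdot> x\<^sup>c\<^sup>c\<^sup>c)\<^sup>c"
    using assms by (simp add: closed meet_commute)
  also have "\<dots> = x"
    using assms by (simp add: closed huntington[symmetric])
  finally show ?thesis .
qed

end

theorem lemma4p24:
  fixes B :: "'a set" and meet :: "'a \<Rightarrow> 'a \<Rightarrow> 'a" and cmp :: "'a \<Rightarrow> 'a"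
  assumes meet_closed: "\<And>x y. x \<in> B \<Longrightarrow> y \<in> B \<Longrightarrow> meet x y \<in> B"
    and cmp_closed: "\<And>x. x \<in> B \<Longrightarrow> cmp x \<in> B"
    and ax1: "\<And>x y z. x \<in> B \<Longrightarrow> y \<in> B \<Longrightarrow> z \<in> B \<Longrightarrow>
                meet x (meet y z) = meet y (meet z x)"
    and ax2: "\<And>x y. x \<in> B \<Longrightarrow> y \<in> B \<Longrightarrow>
                x = meet (cmp (meet (cmp x) y)) (cmp (meet (cmp x) (cmp y)))"
  shows "\<forall>x\<in>B. cmp (cmp x) = x"
proof -
  interpret factorizable_cyclic_magma B meet
  proof
    show "\<exists>p\<in>B. \<exists>q\<in>B. x = meet p q" if "x \<in> B" for x
      using that ax2[of x x] by (meson cmp_closed meet_closed)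
  qed (fact meet_closed ax1)+
  interpret dual_huntington B meet cmp
    by unfold_locales (fact meet_closed cmp_closed meet_commute meet_assoc ax2)+
  show ?thesis
    using cmp_cmp by blast
qed

end
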